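(* Let $p:\widetilde G\to G$ be a two-fold cover and $\tilde g\in\widetilde G$ semisimple. Then (1) $p(\mathcal O(\widetilde G,\tilde g))=\mathcal O(G,p(\tilde g))$; (2) $p^{-1}(\mathcal O(G,p(\tilde g)))=\mathcal O(\widetilde G,\tilde g)\cup\mathcal O(\widetilde G,-\tilde g)$; (3) if $\tilde g$ is strongly regular and relevant, then $\mathcal O(\widetilde G,\tilde g)\neq\mathcal O(\widetilde G,-\tilde g)$.
   Context: $G$ is the group of real points of a connected reductive complex algebraic group, and $p$ has kernel identified with $\{\pm1\}$. $\mathcal O(X,x)$ denotes the $X$-conjugacy class of $x$. $\tilde g$ is strongly regular if $p(\tilde g)$ is semisimple with centralizer in $G(\mathbb C)$ a maximal torus; then $H=\mathrm{Cent}_G(p(\tilde g))$ is a Cartan subgroup. A strongly regular semisimple $\tilde g$ is relevant if $\tilde g\in Z(p^{-1}(H))$ for $H=\mathrm{Cent}_G(p(\tilde g))$. *)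

theory Defs
  imports "HOL-Algebra.Algebra"
begin

definition conj_class :: "('a, 'm) monoid_scheme \<Rightarrow> 'a \<Rightarrow> 'a set" where
  "conj_class H x = {y \<otimes>\<^bsub>H\<^esub> x \<otimes>\<^bsub>H\<^esub> inv\<^bsub>H\<^esub> y | y. y \<in> carrier H}"

definition centralizer_of :: "('a, 'm) monoid_scheme \<Rightarrow> 'a \<Rightarrow> 'a set" where
  "centralizer_of H x = {y \<in> carrier H. y \<otimes>\<^bsub>H\<^esub> x = x \<otimes>\<^bsub>H\<^esub> y}"

definition center_of :: "('a, 'm) monoid_scheme \<Rightarrow> 'a set \<Rightarrow> 'a set" where
  "center_of H S = {x \<in> S. \<forall>y\<in>S. x \<otimes>\<^bsub>H\<^esub> y = y \<otimes>\<^bsub>H\<^esub> x}"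

definition relevant ::
  "('a, 'm) monoid_scheme \<Rightarrow> ('b, 'n) monoid_scheme \<Rightarrow> ('a \<Rightarrow> 'b) \<Rightarrow> 'a \<Rightarrow> bool" where
  "relevant Gt G p gt \<longleftrightarrow>
     gt \<in> center_of Gt (carrier Gt \<inter> p -` centralizer_of G (p gt))"

end

theory Submission
  imports Defs
begin

text \<open>For a surjective homomorphism p the image of a conjugacy class is a conjugacy class,
and the fibre of p over the class of p a consists of the classes of the translates k a by
kernel elements k; for a two-element kernel {1, z} these are the classes of a and z a.
If the class of a contained z a, some y would conjugate a to z a; then p y centralizes p a,
so by relevance y commutes with a, forcing z a = a, i.e. z = 1.\<close>

lemma (in group) conj_class_iff:
  "x \<in> conj_class G a \<longleftrightarrow> (\<exists>y\<in>carrier G. x = y \<otimes> a \<otimes> inv y)"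
  unfolding conj_class_def by blast

lemma (in group) self_in_conj_class:
  "a \<in> carrier G \<Longrightarrow> a \<in> conj_class G a"
  unfolding conj_class_iff by (metis one_closed inv_one l_one r_one)

lemma (in group) conj_eq_self_iff_commute:
  assumes "y \<in> carrier G" "a \<in> carrier G"
  shows "y \<otimes> a \<otimes> inv y = a \<longleftrightarrow> y \<otimes> a = a \<otimes> y"
  using assms by (metis inv_closed m_assoc m_closed r_one r_inv l_inv)

lemma (in group_hom) image_conj_class:
  assumes surj: "h ` carrier G = carrier H" and a: "a \<in> carrier G"
  shows "h ` conj_class G a = conj_class H (h a)"
proof
  show "h ` conj_class G a \<subseteq> conj_class H (h a)"
    using a by (auto simp: G.conj_class_iff H.conj_class_iff intro!: bexI[of _ "h _"])
  show "conj_class H (h a) \<subseteq> h ` conj_class G a"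
  proof
    fix x assume "x \<in> conj_class H (h a)"
    then obtain u where "u \<in> carrier H" "x = u \<otimes>\<^bsub>H\<^esub> h a \<otimes>\<^bsub>H\<^esub> inv\<^bsub>H\<^esub> u"
      by (auto simp: H.conj_class_iff)
    moreover obtain y where "y \<in> carrier G" "u = h y"
      using surj \<open>u \<in> carrier H\<close> by blast
    ultimately have "y \<in> carrier G" "x = h y \<otimes>\<^bsub>H\<^esub> h a \<otimes>\<^bsub>H\<^esub> inv\<^bsub>H\<^esub> h y"
      by simp_all
    then have "x = h (y \<otimes> a \<otimes> inv y)" "y \<otimes> a \<otimes> inv y \<in> conj_class G a"
      using a by (auto simp: G.conj_class_iff)
    then show "x \<in> h ` conj_class G a" by blast
  qed
qed

lemma (in group_hom) vimage_conj_class: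
  assumes surj: "h ` carrier G = carrier H" and a: "a \<in> carrier G"
  shows "carrier G \<inter> h -` conj_class H (h a) = (\<Union>k\<in>kernel G H h. conj_class G (k \<otimes> a))"
proof
  show "carrier G \<inter> h -` conj_class H (h a) \<subseteq> (\<Union>k\<in>kernel G H h. conj_class G (k \<otimes> a))"
  proof
    fix x assume "x \<in> carrier G \<inter> h -` conj_class H (h a)"
    then obtain u where x: "x \<in> carrier G" and "u \<in> carrier H"
      and "h x = u \<otimes>\<^bsub>H\<^esub> h a \<otimes>\<^bsub>H\<^esub> inv\<^bsub>H\<^esub> u"
      by (auto simp: H.conj_class_iff)
    moreover obtain y where y: "y \<in> carrier G" and "u = h y"
      using surj \<open>u \<in> carrier H\<close> by blast
    ultimately have hx: "h x = h y \<otimes>\<^bsub>H\<^esub> h a \<otimes>\<^bsub>H\<^esub> inv\<^bsub>H\<^esub> h y"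
      by simp
    \<comment> \<open>the kernel element measuring how far x is from the conjugate of a by y\<close>
    define k where "k = inv y \<otimes> x \<otimes> y \<otimes> inv a"
    have "k \<in> kernel G H h"
      using x y a hx by (simp add: k_def kernel_def H.m_assoc)
    moreover have "x = y \<otimes> (k \<otimes> a) \<otimes> inv y"
      using x y a by (simp add: k_def G.m_assoc flip: G.m_assoc[of y "inv y"])
    ultimately show "x \<in> (\<Union>k\<in>kernel G H h. conj_class G (k \<otimes> a))"
      using y by (auto simp: G.conj_class_iff)
  qed
  show "(\<Union>k\<in>kernel G H h. conj_class G (k \<otimes> a)) \<subseteq> carrier G \<inter> h -` conj_class H (h a)"
  proof
    fix x assume "x \<in> (\<Union>k\<in>kernel G H h. conj_class G (k \<otimes> a))"
    then obtain k y where k: "k \<in> carrier G" "h k = \<one>\<^bsub>H\<^esub>" and y: "y \<in> carrier G"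
      and x: "x = y \<otimes> (k \<otimes> a) \<otimes> inv y"
      by (auto simp: kernel_def G.conj_class_iff)
    have "h x = h y \<otimes>\<^bsub>H\<^esub> h a \<otimes>\<^bsub>H\<^esub> inv\<^bsub>H\<^esub> h y"
      using k y a by (simp add: x)
    then show "x \<in> carrier G \<inter> h -` conj_class H (h a)"
      using k y a x by (auto simp: H.conj_class_iff)
  qed
qed

lemma (in group_hom) relevant_conj_class_ne_kernel_translate:
  assumes rel: "relevant G H h a" and a: "a \<in> carrier G"
    and k: "k \<in> kernel G H h" "k \<noteq> \<one>"
  shows "conj_class G a \<noteq> conj_class G (k \<otimes> a)"
proof
  assume eq: "conj_class G a = conj_class G (k \<otimes> a)"
  have "k \<in> carrier G" "h k = \<one>\<^bsub>H\<^esub>" using k by (auto simp: kernel_def)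
  then have "k \<otimes> a \<in> conj_class G a"
    using a eq G.self_in_conj_class[of "k \<otimes> a"] by simp
  then obtain y where y: "y \<in> carrier G" and conj: "y \<otimes> a \<otimes> inv y = k \<otimes> a"
    unfolding G.conj_class_iff by metis
  have "h y \<otimes>\<^bsub>H\<^esub> h a \<otimes>\<^bsub>H\<^esub> inv\<^bsub>H\<^esub> h y = h a"
    using arg_cong[OF conj, of h] y a \<open>k \<in> carrier G\<close> \<open>h k = \<one>\<^bsub>H\<^esub>\<close> by simp
  then have "y \<in> carrier G \<inter> h -` centralizer_of H (h a)"
    using y a by (simp add: centralizer_of_def H.conj_eq_self_iff_commute)
  then have "y \<otimes> a \<otimes> inv y = a"
    using rel y a by (auto simp: relevant_def center_of_def G.conj_eq_self_iff_commute)
  with conj have "k \<otimes> a = \<one> \<otimes> a" using a by simp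
  then show False
    using k(2) a \<open>k \<in> carrier G\<close> by (metis G.one_closed G.r_cancel)
qed

theorem mainTheorem13:
  fixes Gt :: "('a, 'm) monoid_scheme" and G :: "('b, 'n) monoid_scheme"
    and p :: "'a \<Rightarrow> 'b" and z gt :: 'a
  assumes "group Gt" and "group G"
    and "p \<in> hom Gt G" and "p ` carrier Gt = carrier G"
    and "z \<in> carrier Gt" and "z \<noteq> \<one>\<^bsub>Gt\<^esub>"
    and "kernel Gt G p = {\<one>\<^bsub>Gt\<^esub>, z}"
    and "gt \<in> carrier Gt"
  shows "p ` conj_class Gt gt = conj_class G (p gt)
    \<and> carrier Gt \<inter> p -` conj_class G (p gt)
           = conj_class Gt gt \<union> conj_class Gt (z \<otimes>\<^bsub>Gt\<^esub> gt)
    \<and> (relevant Gt G p gt \<longrightarrow> conj_class Gt gt \<noteq> conj_class Gt (z \<otimes>\<^bsub>Gt\<^esub> gt))"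
proof -
  interpret group_hom Gt G p
    using assms(1-3) by (simp add: group_hom_def group_hom_axioms_def)
  have "carrier Gt \<inter> p -` conj_class G (p gt)
           = conj_class Gt gt \<union> conj_class Gt (z \<otimes>\<^bsub>Gt\<^esub> gt)"
    using vimage_conj_class[OF assms(4,8)] assms(7,8) by simp
  moreover have "z \<in> kernel Gt G p" using assms(7) by simp
  ultimately show ?thesis
    using image_conj_class[OF assms(4,8)] relevant_conj_class_ne_kernel_translate assms(6,8)
    by blast
qed

end
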